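(* Let $\lambda=2\cos(\pi/5)$ and let $H_5$ be the subgroup of $SL(2,\mathbb R)$ generated by $S=\begin{pmatrix}0&1\\-1&0\end{pmatrix}$ and $T=\begin{pmatrix}1&\lambda\\0&1\end{pmatrix}$. Suppose that $H(4)$ contains an element $\sigma$ with $\sigma\equiv\begin{pmatrix}1&4\\0&1\end{pmatrix}\pmod{8}$. Then $[H(2^n):H(2^{n+1})]=2^6$ for every integer $n\ge 2$, and $[H_5:H(2^n)]=2^{6(n-2)}[H_5:H(4)]$ for every integer $n\ge2$.
   Context: For $\alpha\in\mathbb Z[\lambda]$, $H(\alpha)=\{(a_{ij})\in H_5 : a_{11}-1,\ a_{22}-1,\ a_{12},\ a_{21}\in \alpha\mathbb Z[\lambda]\}$. Congruence of matrices modulo $8$ means entrywise congruence modulo the ideal $8\mathbb Z[\lambda]$. *)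

theory Defs
  imports "HOL-Analysis.Analysis" "HOL-Algebra.Coset" "HOL-Algebra.Generated_Groups"
begin

definition lam :: real where "lam = 2 * cos (pi / 5)"

definition Zlam :: "real set" where
  "Zlam = {of_int a + of_int b * lam | a b. True}"

definition in_ideal :: "real \<Rightarrow> real \<Rightarrow> bool" where
  "in_ideal \<alpha> x \<longleftrightarrow> (\<exists>y\<in>Zlam. x = \<alpha> * y)"

definition SL2 :: "(real^2^2) monoid" where
  "SL2 = \<lparr>carrier = {A. det A = 1}, mult = (**), one = mat 1\<rparr>"

definition matS :: "real^2^2" where
  "matS = vector [vector [0, 1], vector [-1, 0]]"

definition matT :: "real^2^2" where
  "matT = vector [vector [1, lam], vector [0, 1]]"

definition H5 :: "(real^2^2) set" where
  "H5 = generate SL2 {matS, matT}"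

definition Hcong :: "real \<Rightarrow> (real^2^2) set" where
  "Hcong \<alpha> = {A \<in> H5. in_ideal \<alpha> (A$1$1 - 1) \<and> in_ideal \<alpha> (A$2$2 - 1)
                    \<and> in_ideal \<alpha> (A$1$2) \<and> in_ideal \<alpha> (A$2$1)}"

definition mat_cong :: "real \<Rightarrow> real^2^2 \<Rightarrow> real^2^2 \<Rightarrow> bool" where
  "mat_cong \<alpha> A B \<longleftrightarrow> (\<forall>i j. in_ideal \<alpha> (A$i$j - B$i$j))"

definition idx :: "(real^2^2) set \<Rightarrow> (real^2^2) set \<Rightarrow> nat" where
  "idx K H = card (rcosets\<^bsub>SL2\<lparr>carrier := K\<rparr>\<^esub> H)"

end

theory Submission
  imports Defs
begin

text \<open>
  For \<open>m = 2\<^sup>n\<close> with \<open>n \<ge> 2\<close>, every \<open>A \<in> H(m)\<close> can be written \<open>A \<equiv> 1 + m X (mod 2m)\<close>, and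
  \<open>X mod 2\<close> is a trace-zero matrix over \<open>\<int>[\<lambda>]/2 \<cong> \<bbbF>\<^sub>4\<close>. Since \<open>m\<^sup>2 \<equiv> 0 (mod 2m)\<close>, the map
  \<open>A \<mapsto> X mod 2\<close> turns products into sums, so it induces an injection of \<open>H(m)/H(2m)\<close> into
  the additive group \<open>sl\<^sub>2(\<bbbF>\<^sub>4)\<close> of order \<open>4\<^sup>3 = 2\<^sup>6\<close>. It is onto: the powers of \<open>\<sigma>\<close> and
  of \<open>T\<close> realise \<open>E\<^sub>1\<^sub>2\<close> and \<open>\<lambda> E\<^sub>1\<^sub>2\<close> at every level (squaring doubles the level), and
  conjugating them by \<open>S\<close> and by \<open>TSTS\<close> and adding yields all of \<open>sl\<^sub>2(\<bbbF>\<^sub>4)\<close>. The formula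
  for \<open>[H\<^sub>5 : H(2\<^sup>n)]\<close> then follows from multiplicativity of the index in towers.
\<close>

section \<open>Index of subgroups\<close>

lemma (in group) rcos_eq_iff_mult_inv:
  assumes "subgroup K G" "x \<in> carrier G" "y \<in> carrier G"
  shows "K #> x = K #> y \<longleftrightarrow> x \<otimes> inv y \<in> K"
  using assms subgroup.rcos_module[OF assms(1) is_group] rcos_self repr_independence
  by metis

lemma rcosets_carrier_update: "rcosets\<^bsub>G\<lparr>carrier := H\<rparr>\<^esub> K = (\<lambda>h. K #>\<^bsub>G\<^esub> h) ` H"
  by (auto simp: RCOSETS_def r_coset_def)

lemma (in group) card_rcosets_transversal:
  assumes K: "subgroup K G" and e: "e \<in> T \<rightarrow> carrier G"
    and covers: "\<And>a. a \<in> carrier G \<Longrightarrow> \<exists>t\<in>T. a \<otimes> inv (e t) \<in> K"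
    and separates: "\<And>t t'. t \<in> T \<Longrightarrow> t' \<in> T \<Longrightarrow> e t \<otimes> inv (e t') \<in> K \<Longrightarrow> t = t'"
  shows "card (rcosets K) = card T"
proof -
  have "bij_betw (\<lambda>t. K #> e t) T (rcosets K)"
  proof (rule bij_betw_imageI)
    show "inj_on (\<lambda>t. K #> e t) T"
    proof (rule inj_onI)
      fix t t' assume "t \<in> T" "t' \<in> T" "K #> e t = K #> e t'"
      then show "t = t'" using e separates rcos_eq_iff_mult_inv[OF K] by (metis funcset_mem)
    qed
    show "(\<lambda>t. K #> e t) ` T = rcosets K"
    proof
      show "(\<lambda>t. K #> e t) ` T \<subseteq> rcosets K"
        using e subgroup.subset[OF K] by (auto intro: rcosetsI)
      show "rcosets K \<subseteq> (\<lambda>t. K #> e t) ` T"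
      proof
        fix R assume "R \<in> rcosets K"
        then obtain a where a: "a \<in> carrier G" "R = K #> a" by (auto simp: RCOSETS_def)
        then obtain t where "t \<in> T" "a \<otimes> inv (e t) \<in> K" using covers by blast
        then have "R = K #> e t" using a e rcos_eq_iff_mult_inv[OF K] by (metis funcset_mem)
        then show "R \<in> (\<lambda>t. K #> e t) ` T" using \<open>t \<in> T\<close> by blast
      qed
    qed
  qed
  then show ?thesis by (rule bij_betw_same_card[symmetric])
qed

lemma (in group) bij_betw_rcosets_tower:
  assumes H: "subgroup H G" and K: "subgroup K G" and KH: "K \<subseteq> H"
    and rep: "\<And>\<beta>. \<beta> \<in> rcosets H \<Longrightarrow> rep \<beta> \<in> carrier G \<and> \<beta> = H #> rep \<beta>"
  shows "bij_betw (\<lambda>(\<beta>, \<gamma>). \<gamma> #> rep \<beta>) ((rcosets H) \<times> (\<lambda>h. K #> h) ` H) (rcosets K)"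
proof (rule bij_betw_imageI)
  have HG: "H \<subseteq> carrier G" and KG: "K \<subseteq> carrier G"
    using H K by (auto dest: subgroup.subset)
  have shift: "K #> h #> x = K #> (h \<otimes> x)" if "h \<in> carrier G" "x \<in> carrier G" for h x
    using coset_mult_assoc[OF KG that] .
  show "inj_on (\<lambda>(\<beta>, \<gamma>). \<gamma> #> rep \<beta>) ((rcosets H) \<times> (\<lambda>h. K #> h) ` H)"
  proof (rule inj_onI, clarsimp)
    fix \<beta> \<beta>' h h'
    assume \<beta>: "\<beta> \<in> rcosets H" "\<beta>' \<in> rcosets H" and h: "h \<in> H" "h' \<in> H"
      and eq: "K #> h #> rep \<beta> = K #> h' #> rep \<beta>'"
    have hG: "h \<in> carrier G" "h' \<in> carrier G" using h HG by auto
    have "(h \<otimes> rep \<beta>) \<otimes> inv (h' \<otimes> rep \<beta>') \<in> K"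
      using eq rep \<beta> hG by (simp add: shift rcos_eq_iff_mult_inv[OF K])
    then have "H #> (h \<otimes> rep \<beta>) = H #> (h' \<otimes> rep \<beta>')"
      using KH rep \<beta> hG by (auto simp: rcos_eq_iff_mult_inv[OF H])
    moreover have "H #> (g \<otimes> rep \<gamma>) = \<gamma>" if "g \<in> H" "\<gamma> \<in> rcosets H" for g \<gamma>
      using that HG rep[OF that(2)]
      by (metis coset_mult_assoc subgroup.rcos_const[OF H is_group] subsetD)
    ultimately have same: "\<beta> = \<beta>'" using h \<beta> by metis
    have "h \<otimes> inv h' = (h \<otimes> rep \<beta>) \<otimes> inv (h' \<otimes> rep \<beta>)"
      using hG rep \<beta> by (simp add: inv_mult_group m_assoc) (simp add: m_assoc[symmetric])
    also have "\<dots> \<in> K"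
      using eq same rep \<beta> hG by (simp add: shift rcos_eq_iff_mult_inv[OF K])
    finally show "\<beta> = \<beta>' \<and> K #> h = K #> h'"
      using same hG by (simp add: rcos_eq_iff_mult_inv[OF K])
  qed
  show "(\<lambda>(\<beta>, \<gamma>). \<gamma> #> rep \<beta>) ` ((rcosets H) \<times> (\<lambda>h. K #> h) ` H) = rcosets K"
  proof (intro equalityI subsetI)
    fix R assume "R \<in> (\<lambda>(\<beta>, \<gamma>). \<gamma> #> rep \<beta>) ` ((rcosets H) \<times> (\<lambda>h. K #> h) ` H)"
    then obtain \<beta> h where \<beta>: "\<beta> \<in> rcosets H" and "h \<in> H" "R = K #> h #> rep \<beta>" by blast
    then have "R = K #> (h \<otimes> rep \<beta>)" "h \<otimes> rep \<beta> \<in> carrier G"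
      using rep[OF \<beta>] HG by (auto simp: shift)
    then show "R \<in> rcosets K" using KG by (simp add: rcosetsI)
  next
    fix R assume "R \<in> rcosets K"
    then obtain a where a: "a \<in> carrier G" "R = K #> a" by (auto simp: RCOSETS_def)
    define \<beta> where "\<beta> = H #> a"
    have \<beta>: "\<beta> \<in> rcosets H" using a HG by (simp add: \<beta>_def rcosetsI)
    define h where "h = a \<otimes> inv (rep \<beta>)"
    have "h \<in> H"
      using rep[OF \<beta>] rcos_eq_iff_mult_inv[OF H a(1), of "rep \<beta>"] unfolding h_def \<beta>_def by simp
    moreover have "R = K #> h #> rep \<beta>"
      using a rep[OF \<beta>] by (simp add: h_def shift m_assoc)
    ultimately show "R \<in> (\<lambda>(\<beta>, \<gamma>). \<gamma> #> rep \<beta>) ` ((rcosets H) \<times> (\<lambda>h. K #> h) ` H)"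
      using \<beta> by blast
  qed
qed

text \<open>\<open>[G : K] = [G : H] [H : K]\<close>, including the infinite cases, where \<open>card\<close> is \<open>0\<close>.\<close>
lemma (in group) card_rcosets_tower:
  assumes H: "subgroup H G" and K: "subgroup K G" and KH: "K \<subseteq> H"
  shows "card (rcosets K) = card (rcosets H) * card (rcosets\<^bsub>G\<lparr>carrier := H\<rparr>\<^esub> K)"
proof -
  define rep where "rep \<beta> = (SOME x. x \<in> carrier G \<and> \<beta> = H #> x)" for \<beta>
  have "rep \<beta> \<in> carrier G \<and> \<beta> = H #> rep \<beta>" if "\<beta> \<in> rcosets H" for \<beta>
    using someI_ex[of "\<lambda>x. x \<in> carrier G \<and> \<beta> = H #> x"] that
    unfolding rep_def RCOSETS_def by auto
  then have "card (rcosets K) = card ((rcosets H) \<times> (\<lambda>h. K #> h) ` H)"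
    using bij_betw_rcosets_tower[OF H K KH] by (metis bij_betw_same_card)
  then show ?thesis unfolding rcosets_carrier_update card_cartesian_product .
qed

section \<open>The ring \<open>\<int>[\<lambda>]\<close> and its ideals\<close>

lemma lam_sq: "lam * lam = lam + 1"
proof -
  define c where "c = cos (pi/5)"
  have "cos (3 * (pi/5)) = cos (pi - 2 * (pi/5))" by (rule arg_cong[where f=cos]) simp
  also have "\<dots> = - cos (2 * (pi/5))" by (simp only: cos_pi_minus)
  finally have "4 * c^3 - 3*c = -(2*c^2 - 1)" unfolding c_def cos_treble_cos cos_double_cos .
  then have "(c + 1) * (4*c^2 - 2*c - 1) = 0"
    by (simp add: algebra_simps power2_eq_square power3_eq_cube)
  moreover have "c > 0" unfolding c_def by (rule cos_gt_zero_pi) (use pi_gt_zero in linarith)+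
  ultimately have "4*c^2 - 2*c - 1 = 0" by simp
  then show ?thesis unfolding lam_def c_def[symmetric] by (simp add: algebra_simps power2_eq_square)
qed

text \<open>Infinite descent: both \<open>a\<close> and \<open>b\<close> must be even, and the equation is homogeneous.\<close>
lemma int_golden_form_eq_0: "(a::int)^2 + a*b - b^2 = 0 \<Longrightarrow> a = 0 \<and> b = 0"
proof (induction "nat (\<bar>a\<bar> + \<bar>b\<bar>)" arbitrary: a b rule: less_induct)
  case less
  show ?case
  proof (cases "a = 0 \<and> b = 0")
    case False
    have "even a \<and> even b"
    proof (rule ccontr)
      assume "\<not> (even a \<and> even b)"
      then have "odd (a^2 + a*b - b^2)" by (auto simp: power2_eq_square)
      then show False using less.prems by simp
    qed
    then obtain a' b' where ab: "a = 2*a'" "b = 2*b'" by (auto elim!: evenE)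
    then have "a'^2 + a'*b' - b'^2 = 0"
      using less.prems by (simp add: algebra_simps power2_eq_square)
    moreover have "nat (\<bar>a'\<bar> + \<bar>b'\<bar>) < nat (\<bar>a\<bar> + \<bar>b\<bar>)" using False ab by auto
    ultimately show ?thesis using less.hyps ab by fastforce
  qed auto
qed

lemma of_int_add_mult_lam_eq_0:
  assumes "of_int a + of_int b * lam = 0" shows "a = 0 \<and> b = 0"
proof -
  have "real_of_int a = - of_int b * lam" using assms by simp
  then have "real_of_int (a^2 + a*b - b^2) = of_int b ^ 2 * (lam * lam - lam - 1)"
    by (simp add: power2_eq_square algebra_simps)
  then have "real_of_int (a^2 + a*b - b^2) = 0" by (simp add: lam_sq)
  then show ?thesis by (intro int_golden_form_eq_0) linarith
qed

lemma ZlamI: "x = of_int a + of_int b * lam \<Longrightarrow> x \<in> Zlam"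
  unfolding Zlam_def by blast

lemma ZlamE: "x \<in> Zlam \<Longrightarrow> (\<And>a b. x = of_int a + of_int b * lam \<Longrightarrow> P) \<Longrightarrow> P"
  unfolding Zlam_def by blast

lemma Zlam_of_int [simp]: "of_int k \<in> Zlam"
  by (rule ZlamI[of _ k 0]) simp

lemma Zlam_0 [simp]: "0 \<in> Zlam"
  using Zlam_of_int[of 0] by simp

lemma Zlam_1 [simp]: "1 \<in> Zlam"
  using Zlam_of_int[of 1] by simp

lemma Zlam_numeral [simp]: "numeral k \<in> Zlam"
  using Zlam_of_int[of "numeral k"] by simp

lemma Zlam_of_nat [simp]: "of_nat n \<in> Zlam"
  using Zlam_of_int[of "int n"] by simp

lemma Zlam_lam [simp]: "lam \<in> Zlam"
  by (rule ZlamI[of _ 0 1]) simp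

lemma Zlam_add [simp]: "x \<in> Zlam \<Longrightarrow> y \<in> Zlam \<Longrightarrow> x + y \<in> Zlam"
  by (elim ZlamE, rule ZlamI[where a="_ + _" and b="_ + _"]) (simp add: algebra_simps)

lemma Zlam_uminus [simp]: "x \<in> Zlam \<Longrightarrow> - x \<in> Zlam"
  by (elim ZlamE, rule ZlamI[where a="- _" and b="- _"]) (simp add: algebra_simps)

lemma Zlam_diff [simp]: "x \<in> Zlam \<Longrightarrow> y \<in> Zlam \<Longrightarrow> x - y \<in> Zlam"
  using Zlam_add[of x "- y"] by simp

lemma Zlam_mult [simp]: "x \<in> Zlam \<Longrightarrow> y \<in> Zlam \<Longrightarrow> x * y \<in> Zlam"
proof (elim ZlamE)
  fix a b c d assume "x = of_int a + of_int b * lam" "y = of_int c + of_int d * lam"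
  then have "x * y = of_int a * of_int c + (of_int a * of_int d + of_int b * of_int c) * lam
      + of_int b * of_int d * (lam * lam)"
    by (simp add: algebra_simps)
  also have "\<dots> = of_int (a*c + b*d) + of_int (a*d + b*c + b*d) * lam"
    by (simp add: lam_sq algebra_simps)
  finally show ?thesis by (rule ZlamI)
qed

lemma Zlam_power [simp]: "x \<in> Zlam \<Longrightarrow> x ^ n \<in> Zlam"
  by (induction n) simp_all

lemma in_idealI: "y \<in> Zlam \<Longrightarrow> x = \<alpha> * y \<Longrightarrow> in_ideal \<alpha> x"
  unfolding in_ideal_def by blast

lemma in_ideal_0 [simp]: "in_ideal \<alpha> 0"
  by (rule in_idealI[of 0]) simp_all

lemma in_ideal_self [simp]: "in_ideal \<alpha> \<alpha>"
  by (rule in_idealI[of 1]) simp_all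

lemma in_ideal_add [simp]: "in_ideal \<alpha> x \<Longrightarrow> in_ideal \<alpha> y \<Longrightarrow> in_ideal \<alpha> (x + y)"
  unfolding in_ideal_def by (auto intro!: bexI[of _ "_ + _"] simp: distrib_left)

lemma in_ideal_uminus [simp]: "in_ideal \<alpha> x \<Longrightarrow> in_ideal \<alpha> (- x)"
  unfolding in_ideal_def by (auto intro!: bexI[of _ "- _"])

lemma in_ideal_diff [simp]: "in_ideal \<alpha> x \<Longrightarrow> in_ideal \<alpha> y \<Longrightarrow> in_ideal \<alpha> (x - y)"
  using in_ideal_add[of \<alpha> x "- y"] by simp

lemma in_ideal_mult_right [simp]: "in_ideal \<alpha> x \<Longrightarrow> z \<in> Zlam \<Longrightarrow> in_ideal \<alpha> (x * z)"
  unfolding in_ideal_def by (auto intro!: bexI[of _ "_ * z"])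

lemma in_ideal_mult_left [simp]: "in_ideal \<alpha> x \<Longrightarrow> z \<in> Zlam \<Longrightarrow> in_ideal \<alpha> (z * x)"
  using in_ideal_mult_right[of \<alpha> x z] by (simp add: mult.commute)

lemma in_ideal_mult_generator: "in_ideal (\<alpha> * \<beta>) x \<Longrightarrow> \<beta> \<in> Zlam \<Longrightarrow> in_ideal \<alpha> x"
  unfolding in_ideal_def by (auto intro!: bexI[of _ "\<beta> * _"])

lemma in_ideal_2_iff_even: "in_ideal 2 (of_int a + of_int b * lam) \<longleftrightarrow> even a \<and> even b"
proof
  assume "in_ideal 2 (of_int a + of_int b * lam)"
  then obtain c d where "of_int a + of_int b * lam = 2 * (of_int c + of_int d * lam)"
    unfolding in_ideal_def by (blast elim: ZlamE)
  then have "of_int (a - 2*c) + of_int (b - 2*d) * lam = 0" by (simp add: algebra_simps)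
  then have "a - 2*c = 0 \<and> b - 2*d = 0" by (rule of_int_add_mult_lam_eq_0)
  then show "even a \<and> even b" by presburger
next
  assume "even a \<and> even b"
  then obtain c d where "a = 2*c" "b = 2*d" by (auto elim!: evenE)
  then show "in_ideal 2 (of_int a + of_int b * lam)"
    by (intro in_idealI[of "of_int c + of_int d * lam"]) (auto intro: ZlamI simp: algebra_simps)
qed

lemma in_ideal_pow2: "k \<le> n \<Longrightarrow> in_ideal (2 ^ k) (2 ^ n)"
  by (rule in_idealI[of "2 ^ (n - k)"]) (simp_all flip: power_add)

definition mod2_rep :: "bool \<Rightarrow> bool \<Rightarrow> real" where
  "mod2_rep p q = of_bool p + of_bool q * lam"

lemma mod2_rep_Zlam [simp]: "mod2_rep p q \<in> Zlam"
  by (simp add: mod2_rep_def)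

lemma mod2_rep_exists: "x \<in> Zlam \<Longrightarrow> \<exists>p q. in_ideal 2 (x - mod2_rep p q)"
proof (elim ZlamE)
  fix a b assume "x = of_int a + of_int b * lam"
  then have "x - mod2_rep (odd a) (odd b) = of_int (a - of_bool (odd a)) + of_int (b - of_bool (odd b)) * lam"
    by (simp add: mod2_rep_def algebra_simps)
  moreover have "even (a - of_bool (odd a))" "even (b - of_bool (odd b))"
    by (cases "even a"; simp) (cases "even b"; simp)
  ultimately show ?thesis by (metis in_ideal_2_iff_even)
qed

lemma mod2_rep_inj:
  assumes "in_ideal 2 (mod2_rep p q - mod2_rep p' q')" shows "p = p' \<and> q = q'"
proof -
  have "mod2_rep p q - mod2_rep p' q' = of_int (of_bool p - of_bool p') + of_int (of_bool q - of_bool q') * lam"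
    by (simp add: mod2_rep_def algebra_simps)
  then have "even (of_bool p - of_bool p' :: int) \<and> even (of_bool q - of_bool q' :: int)"
    using assms in_ideal_2_iff_even by metis
  then show ?thesis by (cases p; cases p'; cases q; cases q') auto
qed

section \<open>\<open>2\<times>2\<close> matrices and the group \<open>H\<^sub>5\<close>\<close>

definition mk :: "real \<Rightarrow> real \<Rightarrow> real \<Rightarrow> real \<Rightarrow> real^2^2" where
  "mk a b c d = vector [vector [a, b], vector [c, d]]"

lemma mk_entries [simp]:
  "mk a b c d $ 1 $ 1 = a" "mk a b c d $ 1 $ 2 = b" "mk a b c d $ 2 $ 1 = c" "mk a b c d $ 2 $ 2 = d"
  by (simp_all add: mk_def)

lemma mat2_eq_iff:
  "(A::real^2^2) = B \<longleftrightarrow> A$1$1 = B$1$1 \<and> A$1$2 = B$1$2 \<and> A$2$1 = B$2$1 \<and> A$2$2 = B$2$2"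
  by (auto simp: vec_eq_iff forall_2)

lemma mk_cases: obtains a b c d where "(A::real^2^2) = mk a b c d"
  by (metis mat2_eq_iff mk_entries)

lemma mk_eq_mk [simp]: "mk a b c d = mk a' b' c' d' \<longleftrightarrow> a = a' \<and> b = b' \<and> c = c' \<and> d = d'"
  by (simp add: mat2_eq_iff)

lemma mk_mult [simp]:
  "mk a b c d ** mk a' b' c' d' = mk (a*a' + b*c') (a*b' + b*d') (c*a' + d*c') (c*b' + d*d')"
  by (simp add: mat2_eq_iff matrix_matrix_mult_def sum_2)

lemma mk_add [simp]: "mk a b c d + mk a' b' c' d' = mk (a+a') (b+b') (c+c') (d+d')"
  by (simp add: mat2_eq_iff)

lemma mk_scaleR [simp]: "r *\<^sub>R mk a b c d = mk (r*a) (r*b) (r*c) (r*d)"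
  by (simp add: mat2_eq_iff)

lemma mk_zero: "(0 :: real^2^2) = mk 0 0 0 0"
  by (simp add: mat2_eq_iff)

lemma mat1_mk: "(mat 1 :: real^2^2) = mk 1 0 0 1"
  by (simp add: mat2_eq_iff mat_def)

lemma det_mk [simp]: "det (mk a b c d) = a*d - b*c"
  by (simp add: det_2)

definition adj :: "real^2^2 \<Rightarrow> real^2^2" where
  "adj A = mk (A$2$2) (- A$1$2) (- A$2$1) (A$1$1)"

lemma adj_mk [simp]: "adj (mk a b c d) = mk d (-b) (-c) a"
  by (simp add: adj_def)

lemma det_adj [simp]: "det (adj A) = det A"
  by (cases A rule: mk_cases) (simp add: mult.commute)

lemma adj_mult: "det A = 1 \<Longrightarrow> adj A ** A = mat 1"
  by (cases A rule: mk_cases) (simp add: mat1_mk algebra_simps)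

lemma mult_adj: "det A = 1 \<Longrightarrow> A ** adj A = mat 1"
  by (cases A rule: mk_cases) (simp add: mat1_mk algebra_simps)

lemma carrier_SL2 [simp]: "carrier SL2 = {A. det A = 1}"
  by (simp add: SL2_def)

lemma mult_SL2 [simp]: "mult SL2 = (**)"
  by (simp add: SL2_def)

lemma one_SL2 [simp]: "one SL2 = mat 1"
  by (simp add: SL2_def)

lemma group_SL2: "group SL2"
proof (rule groupI)
  fix x assume "x \<in> carrier SL2"
  then show "\<exists>y\<in>carrier SL2. y \<otimes>\<^bsub>SL2\<^esub> x = \<one>\<^bsub>SL2\<^esub>"
    by (intro bexI[of _ "adj x"]) (simp_all add: adj_mult)
qed (auto simp: det_mul matrix_mul_assoc)

lemma SL2_inv: "det A = 1 \<Longrightarrow> inv\<^bsub>SL2\<^esub> A = adj A"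
  using group.inv_equality[OF group_SL2, of "adj A" A] by (simp add: adj_mult)

lemma H5_subgroup: "subgroup H5 SL2"
  unfolding H5_def matS_def matT_def
  by (rule group.generate_is_subgroup[OF group_SL2]) (simp add: mk_def[symmetric])

lemma H5_det: "A \<in> H5 \<Longrightarrow> det A = 1"
  using subgroup.subset[OF H5_subgroup] by auto

lemma H5_mult [simp]: "A \<in> H5 \<Longrightarrow> B \<in> H5 \<Longrightarrow> A ** B \<in> H5"
  using subgroup.m_closed[OF H5_subgroup] by fastforce

lemma H5_one [simp]: "mat 1 \<in> H5"
  using subgroup.one_closed[OF H5_subgroup] by simp

lemma H5_adj [simp]: "A \<in> H5 \<Longrightarrow> adj A \<in> H5"
  using subgroup.m_inv_closed[OF H5_subgroup, of A] SL2_inv[OF H5_det] by simp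

lemma matS_mk: "matS = mk 0 1 (-1) 0"
  by (simp add: matS_def mk_def)

lemma matT_mk: "matT = mk 1 lam 0 1"
  by (simp add: matT_def mk_def)

lemma H5_S [simp]: "matS \<in> H5"
  unfolding H5_def by (simp add: generate.incl)

lemma H5_T [simp]: "matT \<in> H5"
  unfolding H5_def by (simp add: generate.incl)

lemma T_power_H5: "mk 1 (of_nat k * lam) 0 1 \<in> H5"
proof (induction k)
  case 0 then show ?case by (simp flip: mat1_mk)
next
  case (Suc k)
  then have "mk 1 (of_nat k * lam) 0 1 ** matT \<in> H5" by simp
  then show ?case by (simp add: matT_mk algebra_simps)
qed

definition Zmat :: "real^2^2 \<Rightarrow> bool" where
  "Zmat A \<longleftrightarrow> A$1$1 \<in> Zlam \<and> A$1$2 \<in> Zlam \<and> A$2$1 \<in> Zlam \<and> A$2$2 \<in> Zlam"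

lemma Zmat_mk [simp]: "Zmat (mk a b c d) \<longleftrightarrow> a \<in> Zlam \<and> b \<in> Zlam \<and> c \<in> Zlam \<and> d \<in> Zlam"
  by (simp add: Zmat_def)

lemma Zmat_mult [simp]: "Zmat A \<Longrightarrow> Zmat B \<Longrightarrow> Zmat (A ** B)"
  by (cases A rule: mk_cases, cases B rule: mk_cases) simp

lemma Zmat_add [simp]: "Zmat A \<Longrightarrow> Zmat B \<Longrightarrow> Zmat (A + B)"
  by (cases A rule: mk_cases, cases B rule: mk_cases) simp

lemma Zmat_scaleR [simp]: "Zmat A \<Longrightarrow> r \<in> Zlam \<Longrightarrow> Zmat (r *\<^sub>R A)"
  by (cases A rule: mk_cases) simp

lemma Zmat_adj [simp]: "Zmat A \<Longrightarrow> Zmat (adj A)"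
  by (cases A rule: mk_cases) simp

lemma Zmat_zero [simp]: "Zmat 0"
  by (simp add: mk_zero)

lemma Zmat_one [simp]: "Zmat (mat 1)"
  by (simp add: mat1_mk)

lemma H5_Zmat: "A \<in> H5 \<Longrightarrow> Zmat A"
  unfolding H5_def
proof (induction rule: generate.induct)
  case (inv h) then show ?case by (auto simp: matS_mk matT_mk SL2_inv)
qed (auto simp: matS_mk matT_mk)

section \<open>Congruence subgroups\<close>

lemma mat_cong_mk [simp]: "mat_cong \<alpha> (mk a b c d) (mk a' b' c' d') \<longleftrightarrow>
    in_ideal \<alpha> (a - a') \<and> in_ideal \<alpha> (b - b') \<and> in_ideal \<alpha> (c - c') \<and> in_ideal \<alpha> (d - d')"
  by (simp add: mat_cong_def forall_2)

lemma mat_cong_iff_Zmat: "mat_cong \<alpha> A B \<longleftrightarrow> (\<exists>E. Zmat E \<and> A = B + \<alpha> *\<^sub>R E)"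
proof -
  obtain a b c d where A: "A = mk a b c d" by (rule mk_cases)
  obtain a' b' c' d' where B: "B = mk a' b' c' d'" by (rule mk_cases)
  have "(\<exists>E. Zmat E \<and> A = B + \<alpha> *\<^sub>R E) \<longleftrightarrow>
      (\<exists>x\<in>Zlam. \<exists>y\<in>Zlam. \<exists>z\<in>Zlam. \<exists>w\<in>Zlam. A = B + \<alpha> *\<^sub>R mk x y z w)"
    by (metis Zmat_mk mk_cases)
  also have "\<dots> \<longleftrightarrow> mat_cong \<alpha> A B"
    unfolding A B by (simp add: in_ideal_def algebra_simps)
  finally show ?thesis ..
qed

lemma mat_cong_refl [simp]: "mat_cong \<alpha> A A"
  by (simp add: mat_cong_def)

lemma mat_cong_sym: "mat_cong \<alpha> A B \<Longrightarrow> mat_cong \<alpha> B A"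
  unfolding mat_cong_def by (metis in_ideal_uminus minus_diff_eq)

lemma mat_cong_trans: "mat_cong \<alpha> A B \<Longrightarrow> mat_cong \<alpha> B C \<Longrightarrow> mat_cong \<alpha> A C"
proof -
  have "A$i$j - C$i$j = (A$i$j - B$i$j) + (B$i$j - C$i$j)" for i j by simp
  then show "mat_cong \<alpha> A B \<Longrightarrow> mat_cong \<alpha> B C \<Longrightarrow> mat_cong \<alpha> A C"
    unfolding mat_cong_def by (metis in_ideal_add)
qed

lemma mat_cong_mult_right:
  assumes "mat_cong \<alpha> A B" "Zmat C" shows "mat_cong \<alpha> (A ** C) (B ** C)"
proof -
  obtain E where "Zmat E" "A = B + \<alpha> *\<^sub>R E" using assms(1) mat_cong_iff_Zmat by blast
  moreover have "(B + \<alpha> *\<^sub>R E) ** C = B ** C + \<alpha> *\<^sub>R (E ** C)"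
    by (cases B rule: mk_cases, cases E rule: mk_cases, cases C rule: mk_cases) (simp add: algebra_simps)
  ultimately show ?thesis
    using assms(2) unfolding mat_cong_iff_Zmat by (intro exI[of _ "E ** C"]) simp
qed

lemma mat_cong_mult_left:
  assumes "mat_cong \<alpha> A B" "Zmat C" shows "mat_cong \<alpha> (C ** A) (C ** B)"
proof -
  obtain E where "Zmat E" "A = B + \<alpha> *\<^sub>R E" using assms(1) mat_cong_iff_Zmat by blast
  moreover have "C ** (B + \<alpha> *\<^sub>R E) = C ** B + \<alpha> *\<^sub>R (C ** E)"
    by (cases B rule: mk_cases, cases E rule: mk_cases, cases C rule: mk_cases) (simp add: algebra_simps)
  ultimately show ?thesis
    using assms(2) unfolding mat_cong_iff_Zmat by (intro exI[of _ "C ** E"]) simp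
qed

lemma mat_cong_mult_generator: "mat_cong (\<alpha> * \<beta>) A B \<Longrightarrow> \<beta> \<in> Zlam \<Longrightarrow> mat_cong \<alpha> A B"
  unfolding mat_cong_def using in_ideal_mult_generator by blast

lemma Hcong_iff: "A \<in> Hcong \<alpha> \<longleftrightarrow> A \<in> H5 \<and> mat_cong \<alpha> A (mat 1)"
  by (cases A rule: mk_cases) (auto simp: Hcong_def mat1_mk)

lemma Hcong_mult_adj_iff:
  assumes "A \<in> H5" "B \<in> H5"
  shows "A ** adj B \<in> Hcong \<alpha> \<longleftrightarrow> mat_cong \<alpha> A B"
proof
  assume "A ** adj B \<in> Hcong \<alpha>"
  then have "mat_cong \<alpha> (A ** adj B ** B) (mat 1 ** B)"
    using assms by (intro mat_cong_mult_right) (auto simp: Hcong_iff H5_Zmat)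
  then show "mat_cong \<alpha> A B"
    using adj_mult[OF H5_det[OF assms(2)]] by (simp flip: matrix_mul_assoc)
next
  assume "mat_cong \<alpha> A B"
  then have "mat_cong \<alpha> (A ** adj B) (B ** adj B)"
    using assms by (intro mat_cong_mult_right) (auto simp: H5_Zmat)
  then show "A ** adj B \<in> Hcong \<alpha>"
    using assms mult_adj[OF H5_det[OF assms(2)]] by (simp add: Hcong_iff)
qed

lemma Hcong_subgroup: "subgroup (Hcong \<alpha>) SL2"
proof (rule subgroup.intro)
  show "Hcong \<alpha> \<subseteq> carrier SL2" using H5_det by (auto simp: Hcong_iff)
  show "\<one>\<^bsub>SL2\<^esub> \<in> Hcong \<alpha>" by (simp add: Hcong_iff)
next
  fix A B assume A: "A \<in> Hcong \<alpha>" and B: "B \<in> Hcong \<alpha>"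
  then have "mat_cong \<alpha> (A ** B) (mat 1 ** B)"
    by (intro mat_cong_mult_right) (auto simp: Hcong_iff H5_Zmat)
  then show "A \<otimes>\<^bsub>SL2\<^esub> B \<in> Hcong \<alpha>"
    using A B by (auto simp: Hcong_iff intro: mat_cong_trans)
next
  fix A assume "A \<in> Hcong \<alpha>"
  then show "inv\<^bsub>SL2\<^esub> A \<in> Hcong \<alpha>"
    using Hcong_mult_adj_iff[of "mat 1" A \<alpha>] by (simp add: Hcong_iff H5_det SL2_inv mat_cong_sym)
qed

lemma Hcong_double_subset: "Hcong (2 * \<alpha>) \<subseteq> Hcong \<alpha>"
  using mat_cong_mult_generator[of \<alpha> 2] by (auto simp: Hcong_iff mult.commute)

section \<open>Residues at level \<open>m\<close>\<close>

text \<open>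
  For \<open>m \<noteq> 0\<close> the residue is determined modulo \<open>2\<close>, and it determines the coset of \<open>A\<close>
  modulo \<open>H(2m)\<close> (see \<open>level_residue_cong_iff\<close>).
\<close>
definition level_residue :: "real \<Rightarrow> real^2^2 \<Rightarrow> real^2^2 \<Rightarrow> bool" where
  "level_residue m A X \<longleftrightarrow> A \<in> H5 \<and> Zmat X \<and> mat_cong (2 * m) A (mat 1 + m *\<^sub>R X)"

definition level_residues :: "real \<Rightarrow> (real^2^2) set" where
  "level_residues m = {X. \<exists>A. level_residue m A X}"

lemma mat_cong_one_add_scaleR:
  "mat_cong 2 X Y \<Longrightarrow> mat_cong (2 * m) (mat 1 + m *\<^sub>R X) (mat 1 + m *\<^sub>R Y)"
  unfolding mat_cong_iff_Zmat by (auto simp: algebra_simps)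

lemma mat_cong_one_add_scaleR_iff:
  assumes "m \<noteq> 0"
  shows "mat_cong (2 * m) (mat 1 + m *\<^sub>R X) (mat 1 + m *\<^sub>R Y) \<longleftrightarrow> mat_cong 2 X Y"
proof
  assume "mat_cong (2 * m) (mat 1 + m *\<^sub>R X) (mat 1 + m *\<^sub>R Y)"
  then obtain E where "Zmat E" "m *\<^sub>R X = m *\<^sub>R (Y + 2 *\<^sub>R E)"
    unfolding mat_cong_iff_Zmat by (auto simp: algebra_simps)
  then show "mat_cong 2 X Y" using assms unfolding mat_cong_iff_Zmat by auto
qed (rule mat_cong_one_add_scaleR)

lemma level_residue_Hcong: "level_residue m A X \<Longrightarrow> A \<in> Hcong m"
proof -
  assume A: "level_residue m A X"
  then have "mat_cong m A (mat 1 + m *\<^sub>R X)"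
    using mat_cong_mult_generator[of m 2] by (simp add: level_residue_def mult.commute)
  moreover have "mat_cong m (mat 1 + m *\<^sub>R X) (mat 1)"
    using A unfolding level_residue_def mat_cong_iff_Zmat by auto
  ultimately show ?thesis
    using A by (auto simp: Hcong_iff level_residue_def intro: mat_cong_trans)
qed

lemma level_residue_cong_iff:
  assumes "level_residue m A X" "level_residue m B Y" "m \<noteq> 0"
  shows "mat_cong (2 * m) A B \<longleftrightarrow> mat_cong 2 X Y"
  using assms mat_cong_one_add_scaleR_iff[of m X Y]
  unfolding level_residue_def by (meson mat_cong_sym mat_cong_trans)

text \<open>\<open>det A = 1\<close> forces the residue to have trace \<open>\<equiv> 0 (mod 2)\<close>, as soon as \<open>2 | m\<close>.\<close>
lemma Hcong_level_residue:
  assumes A: "A \<in> Hcong m" and m: "in_ideal 2 m" "m \<noteq> 0"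
  shows "\<exists>X. level_residue m A X \<and> in_ideal 2 (X$1$1 + X$2$2)"
proof -
  obtain q where q: "q \<in> Zlam" "m = 2 * q" using m(1) unfolding in_ideal_def by blast
  obtain E where E: "Zmat E" "A = mat 1 + m *\<^sub>R E"
    using A mat_cong_iff_Zmat by (auto simp: Hcong_iff)
  obtain x y z w where Ee: "E = mk x y z w" by (rule mk_cases)
  have "det A = 1" using A by (simp add: Hcong_iff H5_det)
  then have "m * ((x + w) + m * (x*w - y*z)) = 0"
    unfolding E(2) Ee by (simp add: mat1_mk algebra_simps)
  then have "x + w = - (m * (x*w - y*z))" using m(2) by (simp add: add_eq_0_iff)
  also have "\<dots> = 2 * (- q * (x*w - y*z))" using q(2) by simp
  finally have "in_ideal 2 (x + w)"
    using E(1) q(1) Ee by (intro in_idealI[of "- q * (x*w - y*z)"]) simp_all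
  moreover have "level_residue m A E" using A E by (simp add: level_residue_def Hcong_iff)
  ultimately show ?thesis using Ee by auto
qed

text \<open>\<open>(1 + m X)\<^sup>2 = 1 + 2m X + m\<^sup>2 X\<^sup>2\<close>, and \<open>m\<^sup>2 \<equiv> 0 (mod 4m)\<close> needs \<open>4 | m\<close>.\<close>
lemma level_residue_square:
  assumes A: "level_residue m A X" and m: "in_ideal 4 m"
  shows "level_residue (2 * m) (A ** A) X"
proof -
  obtain w where w: "w \<in> Zlam" "m = 4 * w" using m unfolding in_ideal_def by blast
  obtain E where E: "Zmat E" "A = (mat 1 + m *\<^sub>R X) + (2 * m) *\<^sub>R E"
    using A unfolding level_residue_def mat_cong_iff_Zmat by blast
  define W where "W = E + w *\<^sub>R (X ** X) + (2*w) *\<^sub>R (X ** E + E ** X) + (4*w) *\<^sub>R (E ** E)"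
  have "A ** A = (mat 1 + (2 * m) *\<^sub>R X) + (2 * (2 * m)) *\<^sub>R W"
    unfolding E(2) W_def w(2)
    by (cases X rule: mk_cases, cases E rule: mk_cases) (simp add: mat1_mk algebra_simps)
  moreover have "Zmat W" using A E(1) w(1) by (simp add: W_def level_residue_def)
  moreover have "A ** A \<in> H5" using A by (simp add: level_residue_def)
  ultimately show ?thesis using A unfolding level_residue_def mat_cong_iff_Zmat by auto
qed

lemma level_residue_pow2:
  assumes A: "level_residue m A X" and m: "in_ideal 4 m"
  shows "level_residue (2 ^ k * m) (A [^]\<^bsub>SL2\<^esub> (2 ^ k :: nat)) X"
proof (induction k)
  case 0 then show ?case using A H5_det by (simp add: level_residue_def)
next
  case (Suc k)
  have "A \<in> carrier SL2" using A H5_det by (simp add: level_residue_def)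
  then have "A [^]\<^bsub>SL2\<^esub> (2 ^ Suc k :: nat) = A [^]\<^bsub>SL2\<^esub> (2 ^ k :: nat) ** A [^]\<^bsub>SL2\<^esub> (2 ^ k :: nat)"
    using monoid.nat_pow_mult[OF group.is_monoid[OF group_SL2]] by (simp add: mult_2)
  moreover have "in_ideal 4 (2 ^ k * m)" using m by simp
  ultimately show ?case using level_residue_square[OF Suc.IH] by (simp add: mult.assoc)
qed

lemma zero_in_level_residues: "0 \<in> level_residues m"
  unfolding level_residues_def level_residue_def mem_Collect_eq by (intro exI[of _ "mat 1"]) simp

lemma level_residues_add:
  assumes X: "X \<in> level_residues m" and Y: "Y \<in> level_residues m" and m: "in_ideal 2 m"
  shows "X + Y \<in> level_residues m"
proof -
  obtain A B where A: "level_residue m A X" and B: "level_residue m B Y"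
    using X Y by (auto simp: level_residues_def)
  obtain w where w: "w \<in> Zlam" "m = 2 * w" using m unfolding in_ideal_def by blast
  have Z: "Zmat X" "Zmat Y" "Zmat B" "Zmat (mat 1 + m *\<^sub>R X)"
    using A B w by (auto simp: level_residue_def H5_Zmat)
  have "mat_cong (2 * m) (A ** B) ((mat 1 + m *\<^sub>R X) ** B)"
    using A Z by (intro mat_cong_mult_right) (auto simp: level_residue_def)
  moreover have "mat_cong (2 * m) ((mat 1 + m *\<^sub>R X) ** B) ((mat 1 + m *\<^sub>R X) ** (mat 1 + m *\<^sub>R Y))"
    using B Z by (intro mat_cong_mult_left) (auto simp: level_residue_def)
  moreover have "(mat 1 + m *\<^sub>R X) ** (mat 1 + m *\<^sub>R Y) = (mat 1 + m *\<^sub>R (X + Y)) + (2 * m) *\<^sub>R (w *\<^sub>R (X ** Y))"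
    unfolding w(2) by (cases X rule: mk_cases, cases Y rule: mk_cases) (simp add: mat1_mk algebra_simps)
  then have "mat_cong (2 * m) ((mat 1 + m *\<^sub>R X) ** (mat 1 + m *\<^sub>R Y)) (mat 1 + m *\<^sub>R (X + Y))"
    using Z w(1) unfolding mat_cong_iff_Zmat by (intro exI[of _ "w *\<^sub>R (X ** Y)"]) simp
  ultimately have "level_residue m (A ** B) (X + Y)"
    using A B Z by (auto simp: level_residue_def intro: mat_cong_trans)
  then show ?thesis by (auto simp: level_residues_def)
qed

lemma level_residues_conj:
  assumes X: "X \<in> level_residues m" and g: "g \<in> H5"
  shows "g ** X ** adj g \<in> level_residues m"
proof -
  obtain A where A: "level_residue m A X" using X by (auto simp: level_residues_def)
  have "mat_cong (2 * m) (g ** A ** adj g) (g ** (mat 1 + m *\<^sub>R X) ** adj g)"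
    using A g H5_Zmat by (intro mat_cong_mult_right mat_cong_mult_left) (auto simp: level_residue_def)
  moreover have "g ** (mat 1 + m *\<^sub>R X) ** adj g = g ** adj g + m *\<^sub>R (g ** X ** adj g)"
    by (cases g rule: mk_cases, cases X rule: mk_cases) (simp add: mat1_mk algebra_simps)
  ultimately have "level_residue m (g ** A ** adj g) (g ** X ** adj g)"
    using A g H5_Zmat mult_adj[OF H5_det[OF g]] by (simp add: level_residue_def)
  then show ?thesis by (auto simp: level_residues_def)
qed

lemma level_residues_cong:
  assumes X: "X \<in> level_residues m" and XY: "mat_cong 2 X Y" and Y: "Zmat Y"
  shows "Y \<in> level_residues m"
  using assms mat_cong_one_add_scaleR[OF XY, of m]
  by (auto simp: level_residues_def level_residue_def intro: mat_cong_trans)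

section \<open>The trace-zero residues modulo \<open>2\<close>\<close>

text \<open>Representatives of the trace-zero matrices over \<open>\<int>[\<lambda>]/2\<close>, where \<open>-x = x\<close>.\<close>
definition sl2_mod2_rep :: "bool \<times> bool \<times> bool \<times> bool \<times> bool \<times> bool \<Rightarrow> real^2^2" where
  "sl2_mod2_rep = (\<lambda>(p\<^sub>1, q\<^sub>1, p\<^sub>2, q\<^sub>2, p\<^sub>3, q\<^sub>3).
     mk (mod2_rep p\<^sub>1 q\<^sub>1) (mod2_rep p\<^sub>2 q\<^sub>2) (mod2_rep p\<^sub>3 q\<^sub>3) (mod2_rep p\<^sub>1 q\<^sub>1))"

lemma card_sl2_mod2_reps: "card (UNIV :: (bool \<times> bool \<times> bool \<times> bool \<times> bool \<times> bool) set) = 2 ^ 6"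
  by (simp add: card_UNIV_bool flip: UNIV_Times_UNIV)

lemma sl2_mod2_rep_inj: "mat_cong 2 (sl2_mod2_rep t) (sl2_mod2_rep t') \<Longrightarrow> t = t'"
  by (cases t; cases t') (auto simp: sl2_mod2_rep_def dest: mod2_rep_inj)

lemma sl2_mod2_rep_exists:
  assumes "Zmat X" and trace: "in_ideal 2 (X$1$1 + X$2$2)"
  shows "\<exists>t. mat_cong 2 X (sl2_mod2_rep t)"
proof -
  obtain x y z w where X: "X = mk x y z w" by (rule mk_cases)
  then have Z: "x \<in> Zlam" "y \<in> Zlam" "z \<in> Zlam" using assms(1) by simp_all
  obtain p\<^sub>1 q\<^sub>1 where 1: "in_ideal 2 (x - mod2_rep p\<^sub>1 q\<^sub>1)" using mod2_rep_exists[OF Z(1)] by blast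
  obtain p\<^sub>2 q\<^sub>2 where 2: "in_ideal 2 (y - mod2_rep p\<^sub>2 q\<^sub>2)" using mod2_rep_exists[OF Z(2)] by blast
  obtain p\<^sub>3 q\<^sub>3 where 3: "in_ideal 2 (z - mod2_rep p\<^sub>3 q\<^sub>3)" using mod2_rep_exists[OF Z(3)] by blast
  have "in_ideal 2 (x + w)" using trace X by simp
  moreover have "in_ideal 2 (2 * mod2_rep p\<^sub>1 q\<^sub>1)" by (rule in_idealI) simp_all
  ultimately have "in_ideal 2 ((x + w) - (x - mod2_rep p\<^sub>1 q\<^sub>1) - 2 * mod2_rep p\<^sub>1 q\<^sub>1)"
    using 1 in_ideal_diff by blast
  moreover have "(x + w) - (x - mod2_rep p\<^sub>1 q\<^sub>1) - 2 * mod2_rep p\<^sub>1 q\<^sub>1 = w - mod2_rep p\<^sub>1 q\<^sub>1"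
    by simp
  ultimately have 4: "in_ideal 2 (w - mod2_rep p\<^sub>1 q\<^sub>1)" by simp
  show ?thesis
    using 1 2 3 4 X by (intro exI[of _ "(p\<^sub>1, q\<^sub>1, p\<^sub>2, q\<^sub>2, p\<^sub>3, q\<^sub>3)"]) (simp add: sl2_mod2_rep_def)
qed

lemma E21_in_level_residues:
  assumes E12: "mk 0 x 0 0 \<in> level_residues m" and x: "x \<in> Zlam"
  shows "mk 0 0 x 0 \<in> level_residues m"
proof -
  have "mat_cong 2 (matS ** mk 0 x 0 0 ** adj matS) (mk 0 0 x 0)"
    unfolding mat_cong_iff_Zmat using x by (intro exI[of _ "mk 0 0 (- x) 0"]) (simp add: matS_mk)
  then show ?thesis using level_residues_conj[OF E12 H5_S] level_residues_cong x by simp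
qed

text \<open>Conjugation by \<open>TSTS = [[\<lambda>, -\<lambda>], [\<lambda>, -1]]\<close> turns \<open>y E\<^sub>1\<^sub>2\<close> into \<open>\<lambda>\<^sup>2 y [[-1, 1], [-1, 1]]\<close>.\<close>
lemma all_ones_in_level_residues:
  assumes E12: "mk 0 y 0 0 \<in> level_residues m" and Z: "y \<in> Zlam" "x \<in> Zlam"
    and xy: "in_ideal 2 ((lam + 1) * y - x)"
  shows "mk x x x x \<in> level_residues m"
proof -
  define G where "G = matT ** matS ** matT ** matS"
  have G: "G \<in> H5" "G = mk lam (-lam) lam (-1)"
    by (simp add: G_def) (simp add: G_def matT_mk matS_mk lam_sq)
  obtain e where e: "e \<in> Zlam" "(lam + 1) * y - x = 2 * e" using xy unfolding in_ideal_def by blast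
  have "lam * (lam * y) = y + lam * y" by (simp add: lam_sq distrib_right flip: mult.assoc)
  then have "G ** mk 0 y 0 0 ** adj G = mk x x x x + 2 *\<^sub>R mk (- e - x) e (- e - x) e"
    using e(2) by (simp add: G(2) algebra_simps)
  then have "mat_cong 2 (G ** mk 0 y 0 0 ** adj G) (mk x x x x)"
    unfolding mat_cong_iff_Zmat using e(1) Z by (intro exI[of _ "mk (- e - x) e (- e - x) e"]) simp
  then show ?thesis using level_residues_conj[OF E12 G(1)] level_residues_cong Z by simp
qed

text \<open>The six matrices below span the trace-zero matrices over \<open>\<int>[\<lambda>]/2\<close>.\<close>
lemma sl2_mod2_rep_in_level_residues:
  assumes m: "in_ideal 2 m"
    and E12: "mk 0 1 0 0 \<in> level_residues m" and lam_E12: "mk 0 lam 0 0 \<in> level_residues m"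
  shows "sl2_mod2_rep t \<in> level_residues m"
proof -
  let ?R = "level_residues m"
  have add: "X + Y \<in> ?R" if "X \<in> ?R" "Y \<in> ?R" for X Y
    using level_residues_add[OF that m] .
  have E21: "mk 0 0 1 0 \<in> ?R" "mk 0 0 lam 0 \<in> ?R"
    using E21_in_level_residues E12 lam_E12 by simp_all
  have J: "mk 1 1 1 1 \<in> ?R" "mk (1 + lam) (1 + lam) (1 + lam) (1 + lam) \<in> ?R"
    by (rule all_ones_in_level_residues[OF lam_E12], simp_all add: lam_sq algebra_simps
        in_idealI[of lam]) (rule all_ones_in_level_residues[OF E12], simp_all add: algebra_simps)
  have "mk 1 1 1 1 + mk 0 1 0 0 + mk 0 0 1 0 \<in> ?R"
    and "mk (1 + lam) (1 + lam) (1 + lam) (1 + lam) + mk 1 1 1 1 + mk 0 lam 0 0 + mk 0 0 lam 0 \<in> ?R"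
    using add E12 lam_E12 E21 J by blast+
  moreover have "mat_cong 2 (mk 1 1 1 1 + mk 0 1 0 0 + mk 0 0 1 0) (mat 1)"
    and "mat_cong 2 (mk (1 + lam) (1 + lam) (1 + lam) (1 + lam) + mk 1 1 1 1 + mk 0 lam 0 0
      + mk 0 0 lam 0) (mk lam 0 0 lam)"
    unfolding mat_cong_iff_Zmat
    by (intro exI[of _ "mk 0 1 1 0"], simp add: mat1_mk)
      (intro exI[of _ "mk 1 (1 + lam) (1 + lam) 1"], simp add: algebra_simps)
  ultimately have basis: "mat 1 \<in> ?R" "mk lam 0 0 lam \<in> ?R"
    using level_residues_cong by (simp_all add: mat1_mk)
  have scaled: "of_bool b *\<^sub>R X \<in> ?R" if "X \<in> ?R" for b X
    using that zero_in_level_residues by (cases b) simp_all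
  obtain p\<^sub>1 q\<^sub>1 p\<^sub>2 q\<^sub>2 p\<^sub>3 q\<^sub>3 where t: "t = (p\<^sub>1, q\<^sub>1, p\<^sub>2, q\<^sub>2, p\<^sub>3, q\<^sub>3)" by (cases t)
  have "sl2_mod2_rep t = of_bool p\<^sub>1 *\<^sub>R mat 1 + of_bool q\<^sub>1 *\<^sub>R mk lam 0 0 lam
      + of_bool p\<^sub>2 *\<^sub>R mk 0 1 0 0 + of_bool q\<^sub>2 *\<^sub>R mk 0 lam 0 0
      + of_bool p\<^sub>3 *\<^sub>R mk 0 0 1 0 + of_bool q\<^sub>3 *\<^sub>R mk 0 0 lam 0"
    by (simp add: t sl2_mod2_rep_def mod2_rep_def mat1_mk)
  then show ?thesis by (simp only:) (intro add scaled basis E12 lam_E12 E21)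
qed

lemma E12_in_level_residues:
  assumes \<sigma>: "\<sigma> \<in> Hcong 4" "mat_cong 8 \<sigma> (vector [vector [1, 4], vector [0, 1]])" and n: "2 \<le> n"
  shows "mk 0 1 0 0 \<in> level_residues (2 ^ n)"
proof -
  have "vector [vector [1, 4], vector [0, 1]] = mat 1 + (4::real) *\<^sub>R mk 0 1 0 0"
    by (simp add: mat1_mk mk_def[symmetric])
  then have "level_residue 4 \<sigma> (mk 0 1 0 0)" using \<sigma> by (simp add: level_residue_def Hcong_iff)
  then have "level_residue (2 ^ k * 4) (\<sigma> [^]\<^bsub>SL2\<^esub> (2 ^ k :: nat)) (mk 0 1 0 0)" for k
    by (rule level_residue_pow2) simp
  moreover obtain k where "n = 2 + k" using le_Suc_ex[OF n] by blast
  then have "(2::real) ^ n = 2 ^ k * 4" by (simp add: power_add)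
  ultimately show ?thesis unfolding level_residues_def by (metis mem_Collect_eq)
qed

lemma lam_E12_in_level_residues: "mk 0 lam 0 0 \<in> level_residues (of_nat k)"
proof -
  have "level_residue (of_nat k) (mk 1 (of_nat k * lam) 0 1) (mk 0 lam 0 0)"
    using T_power_H5 by (simp add: level_residue_def mat1_mk)
  then show ?thesis unfolding level_residues_def by auto
qed

lemma idx_Hcong_double:
  assumes m: "in_ideal 2 m" "m \<noteq> 0" and reps: "\<And>t. sl2_mod2_rep t \<in> level_residues m"
  shows "idx (Hcong m) (Hcong (2 * m)) = 2 ^ 6"
proof -
  let ?G = "SL2\<lparr>carrier := Hcong m\<rparr>"
  have G: "group ?G" using group.subgroup_imp_group[OF group_SL2 Hcong_subgroup] .
  have K: "subgroup (Hcong (2 * m)) ?G"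
    by (rule group.subgroup_incl[OF group_SL2 Hcong_subgroup Hcong_subgroup Hcong_double_subset])
  have "\<forall>t. \<exists>A. level_residue m A (sl2_mod2_rep t)"
    using reps by (simp add: level_residues_def)
  then obtain e where e: "\<And>t. level_residue m (e t) (sl2_mod2_rep t)" by metis
  have e_Hcong: "e t \<in> carrier ?G" for t
    using level_residue_Hcong[OF e] by simp
  have mult_inv: "a \<otimes>\<^bsub>?G\<^esub> inv\<^bsub>?G\<^esub> b \<in> Hcong (2 * m) \<longleftrightarrow> mat_cong (2 * m) a b"
    if "a \<in> carrier ?G" "b \<in> carrier ?G" for a b
  proof -
    have "inv\<^bsub>?G\<^esub> b = adj b"
      using that group.m_inv_consistent[OF group_SL2 Hcong_subgroup] SL2_inv H5_det
      by (simp add: Hcong_iff)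
    then show ?thesis using that Hcong_mult_adj_iff[of a b] by (simp add: Hcong_iff)
  qed
  have "card (rcosets\<^bsub>?G\<^esub> Hcong (2 * m)) = card (UNIV :: (bool \<times> bool \<times> bool \<times> bool \<times> bool \<times> bool) set)"
  proof (rule group.card_rcosets_transversal[OF G K])
    show "e \<in> UNIV \<rightarrow> carrier ?G" using e_Hcong by simp
  next
    fix a assume a: "a \<in> carrier ?G"
    then obtain X where X: "level_residue m a X" "in_ideal 2 (X$1$1 + X$2$2)"
      using Hcong_level_residue m by auto
    then obtain t where "mat_cong 2 X (sl2_mod2_rep t)"
      using sl2_mod2_rep_exists level_residue_def by blast
    then have "mat_cong (2 * m) a (e t)" using level_residue_cong_iff[OF X(1) e m(2)] by simp
    then have "a \<otimes>\<^bsub>?G\<^esub> inv\<^bsub>?G\<^esub> e t \<in> Hcong (2 * m)" using mult_inv[OF a e_Hcong] by simp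
    then show "\<exists>t\<in>UNIV. a \<otimes>\<^bsub>?G\<^esub> inv\<^bsub>?G\<^esub> e t \<in> Hcong (2 * m)" by blast
  next
    fix t t' assume "e t \<otimes>\<^bsub>?G\<^esub> inv\<^bsub>?G\<^esub> e t' \<in> Hcong (2 * m)"
    then have "mat_cong (2 * m) (e t) (e t')" using mult_inv[OF e_Hcong e_Hcong] by simp
    then show "t = t'" using level_residue_cong_iff[OF e e m(2)] sl2_mod2_rep_inj by blast
  qed
  then show ?thesis by (simp add: idx_def card_sl2_mod2_reps)
qed

lemma idx_H5_Hcong_double: "idx H5 (Hcong (2 * m)) = idx H5 (Hcong m) * idx (Hcong m) (Hcong (2 * m))"
proof -
  let ?G = "SL2\<lparr>carrier := H5\<rparr>"
  have G: "group ?G" using group.subgroup_imp_group[OF group_SL2 H5_subgroup] .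
  have sub: "subgroup (Hcong \<alpha>) ?G" for \<alpha>
    by (rule group.subgroup_incl[OF group_SL2 Hcong_subgroup H5_subgroup]) (auto simp: Hcong_iff)
  show ?thesis using group.card_rcosets_tower[OF G sub sub Hcong_double_subset] by (simp add: idx_def)
qed

lemma idx_Hcong_pow2_succ:
  assumes \<sigma>: "\<sigma> \<in> Hcong 4" "mat_cong 8 \<sigma> (vector [vector [1, 4], vector [0, 1]])" and n: "2 \<le> n"
  shows "idx (Hcong (2 ^ n)) (Hcong (2 ^ (n + 1))) = 2 ^ 6"
proof -
  have m: "in_ideal 2 (2 ^ n)" using in_ideal_pow2[of 1 n] n by simp
  have "sl2_mod2_rep t \<in> level_residues (2 ^ n)" for t
    using sl2_mod2_rep_in_level_residues[OF m E12_in_level_residues[OF \<sigma> n]]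
      lam_E12_in_level_residues[of "2 ^ n"] by simp
  then show ?thesis using idx_Hcong_double[OF m] by simp
qed

lemma idx_H5_Hcong_pow2:
  assumes succ: "\<And>k. 2 \<le> k \<Longrightarrow> idx (Hcong (2 ^ k)) (Hcong (2 ^ (k + 1))) = 2 ^ 6" and n: "2 \<le> n"
  shows "idx H5 (Hcong (2 ^ n)) = 2 ^ (6 * (n - 2)) * idx H5 (Hcong 4)"
  using n
proof (induction n rule: dec_induct)
  case (step k)
  then have "6 * (Suc k - 2) = 6 * (k - 2) + 6" by simp
  then show ?case
    using step.IH step.hyps(1) idx_H5_Hcong_double[of "2 ^ k"] succ[OF step.hyps(1)]
    by (simp add: power_add)
qed simp

theorem corollary4p3:
  assumes "\<exists>\<sigma>\<in>Hcong 4. mat_cong 8 \<sigma> (vector [vector [1, 4], vector [0, 1]])"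
  shows "(\<forall>n::nat. n \<ge> 2 \<longrightarrow> idx (Hcong (2 ^ n)) (Hcong (2 ^ (n + 1))) = 2 ^ 6)
       \<and> (\<forall>n::nat. n \<ge> 2 \<longrightarrow> idx H5 (Hcong (2 ^ n)) = 2 ^ (6 * (n - 2)) * idx H5 (Hcong 4))"
  using assms idx_Hcong_pow2_succ idx_H5_Hcong_pow2 by blast

end
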